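(* Let $\mathcal{A}$ be a finite set of integers greater than $1$. Then there exist permutations $X\neq X'$ such that $C_aX=C_aX'$ for all $a\in\mathcal{A}$.
   Context: A finite dynamical system (FDS) is a function on a finite set, considered up to isomorphism of functional graphs; the product $AB$ acts on $S_A\times S_B$ by $(a,b)\mapsto(A(a),B(b))$. A permutation is a bijective FDS. $C_n$ denotes the FDS whose functional graph is a directed cycle of length $n$. *)

theory Defs
  imports Main
begin

text \<open>A finite dynamical system (FDS) is represented by a finite carrier set S
  together with a function f mapping S into S (values outside S are irrelevant).\<close>

definition is_fds :: "'a set \<Rightarrow> ('a \<Rightarrow> 'a) \<Rightarrow> bool" where
  "is_fds S f \<longleftrightarrow> finite S \<and> f ` S \<subseteq> S"

definition is_perm_fds :: "'a set \<Rightarrow> ('a \<Rightarrow> 'a) \<Rightarrow> bool" where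
  "is_perm_fds S f \<longleftrightarrow> is_fds S f \<and> bij_betw f S S"

definition fds_iso :: "'a set \<Rightarrow> ('a \<Rightarrow> 'a) \<Rightarrow> 'b set \<Rightarrow> ('b \<Rightarrow> 'b) \<Rightarrow> bool" where
  "fds_iso S f T g \<longleftrightarrow> (\<exists>h. bij_betw h S T \<and> (\<forall>x\<in>S. h (f x) = g (h x)))"

definition fds_prod_set :: "'a set \<Rightarrow> 'b set \<Rightarrow> ('a \<times> 'b) set" where
  "fds_prod_set S T = S \<times> T"

definition fds_prod_fun :: "('a \<Rightarrow> 'a) \<Rightarrow> ('b \<Rightarrow> 'b) \<Rightarrow> ('a \<times> 'b \<Rightarrow> 'a \<times> 'b)" where
  "fds_prod_fun f g = (\<lambda>(a, b). (f a, g b))"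

definition cycle_set :: "nat \<Rightarrow> nat set" where
  "cycle_set n = {0..<n}"

definition cycle_fun :: "nat \<Rightarrow> nat \<Rightarrow> nat" where
  "cycle_fun n = (\<lambda>i. (i + 1) mod n)"

end

theory Submission
  imports Defs "HOL-Library.Countable"
begin

(* List A as a_1, ..., a_k. A state consists of switches b_i and counters v_i in Z/a_i, and one
   step advances exactly the counters whose switch is on. The parity of the number of switches on
   is invariant and splits the states into two permutations X_even and X_odd. X_even has a fixed
   point (all switches off), X_odd has none because every a_i > 1, so they are not isomorphic.
   But C_a_j X_even and C_a_j X_odd are isomorphic: flip switch j and shift counter j by the
   C_a_j-coordinate c; in coordinate j this is the isomorphism C_a C_a = C_a (a C_1) given by
   (c, v) |-> (c, v - c). Since the states form a countable type, all of this transfers to nat. *)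

lemma fds_iso_trans:
  assumes "fds_iso S f T g" and "fds_iso T g U k"
  shows "fds_iso S f U k"
proof -
  obtain h1 where h1: "bij_betw h1 S T" "\<forall>x\<in>S. h1 (f x) = g (h1 x)"
    using assms(1) by (auto simp: fds_iso_def)
  obtain h2 where h2: "bij_betw h2 T U" "\<forall>x\<in>T. h2 (g x) = k (h2 x)"
    using assms(2) by (auto simp: fds_iso_def)
  show ?thesis
    unfolding fds_iso_def
    using h1 h2 by (intro exI[of _ "h2 \<circ> h1"]) (auto intro: bij_betw_trans bij_betw_apply)
qed

lemma fds_iso_sym:
  assumes "is_fds S f" and "fds_iso S f T g"
  shows "fds_iso T g S f"
proof -
  obtain h where h: "bij_betw h S T" and comm: "\<forall>x\<in>S. h (f x) = g (h x)"
    using assms(2) by (auto simp: fds_iso_def)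
  have "inv_into S h (g y) = f (inv_into S h y)" if "y \<in> T" for y
  proof -
    obtain x where x: "x \<in> S" "y = h x" using h \<open>y \<in> T\<close> by (auto simp: bij_betw_def)
    then have "f x \<in> S" using assms(1) by (auto simp: is_fds_def)
    then show ?thesis using x comm h by (metis bij_betw_inv_into_left)
  qed
  then show ?thesis
    unfolding fds_iso_def using bij_betw_inv_into[OF h] by blast
qed

lemma fds_iso_prod:
  assumes "fds_iso S f T g"
  shows "fds_iso (fds_prod_set C S) (fds_prod_fun c f) (fds_prod_set C T) (fds_prod_fun c g)"
proof -
  obtain h where h: "bij_betw h S T" "\<forall>x\<in>S. h (f x) = g (h x)"
    using assms by (auto simp: fds_iso_def)
  show ?thesis
    unfolding fds_iso_def fds_prod_set_def fds_prod_fun_def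
    using h by (intro exI[of _ "map_prod id h"]) (auto intro: bij_betw_map_prod bij_betw_id)
qed

lemma fds_iso_is_perm_fds:
  assumes "fds_iso S f T g" and "is_perm_fds S f"
  shows "is_perm_fds T g"
proof -
  obtain h where h: "bij_betw h S T" and comm: "\<forall>x\<in>S. h (f x) = g (h x)"
    using assms(1) by (auto simp: fds_iso_def)
  have "finite T" using h assms(2) bij_betw_finite by (auto simp: is_perm_fds_def is_fds_def)
  have "g ` T = h ` f ` S"
    using comm bij_betw_imp_surj_on[OF h] by (auto simp: image_image image_iff)
  also have "\<dots> = T"
    using assms(2) h by (simp add: is_perm_fds_def bij_betw_def)
  finally have "g ` T = T" .
  then show ?thesis
    using \<open>finite T\<close> eq_card_imp_inj_on[of T g]
    by (simp add: is_perm_fds_def is_fds_def bij_betw_def)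
qed

lemma fds_iso_fixed_point:
  assumes "fds_iso S f T g" and "x \<in> S" and "f x = x"
  shows "\<exists>y\<in>T. g y = y"
  using assms unfolding fds_iso_def bij_betw_def by (metis imageI)

lemma fds_iso_to_nat:
  fixes f :: "'a::countable \<Rightarrow> 'a"
  shows "fds_iso S f (to_nat ` S) (\<lambda>n. to_nat (f (from_nat n)))"
  unfolding fds_iso_def by (intro exI[of _ to_nat]) (auto simp: bij_betw_def inj_on_def)

lemma cancellation_counterexample_to_nat:
  fixes f g :: "'a::countable \<Rightarrow> 'a" and P :: "'i \<Rightarrow> 'b set" and p :: "'i \<Rightarrow> 'b \<Rightarrow> 'b"
  assumes "is_perm_fds S f" and "is_perm_fds T g" and "\<not> fds_iso S f T g"
    and "\<forall>i\<in>I. fds_iso (fds_prod_set (P i) S) (fds_prod_fun (p i) f)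
                        (fds_prod_set (P i) T) (fds_prod_fun (p i) g)"
  shows "\<exists>(S' :: nat set) f' (T' :: nat set) g'.
           is_perm_fds S' f' \<and> is_perm_fds T' g' \<and> \<not> fds_iso S' f' T' g' \<and>
           (\<forall>i\<in>I. fds_iso (fds_prod_set (P i) S') (fds_prod_fun (p i) f')
                           (fds_prod_set (P i) T') (fds_prod_fun (p i) g'))"
proof -
  define S' f' T' g' where "S' = to_nat ` S" and "f' = (\<lambda>n. to_nat (f (from_nat n)))"
    and "T' = to_nat ` T" and "g' = (\<lambda>n. to_nat (g (from_nat n)))"
  have S_S': "fds_iso S f S' f'" and T_T': "fds_iso T g T' g'"
    unfolding S'_def f'_def T'_def g'_def by (rule fds_iso_to_nat)+
  have S'_S: "fds_iso S' f' S f"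
    using assms(1) S_S' by (simp add: fds_iso_sym is_perm_fds_def)
  have "is_perm_fds S' f'" "is_perm_fds T' g'"
    using assms(1,2) S_S' T_T' by (blast intro: fds_iso_is_perm_fds)+
  moreover have "\<not> fds_iso S' f' T' g'"
    using assms(3) S_S' T_T' assms(2) by (meson fds_iso_sym fds_iso_trans is_perm_fds_def)
  moreover have "fds_iso (fds_prod_set (P i) S') (fds_prod_fun (p i) f')
                         (fds_prod_set (P i) T') (fds_prod_fun (p i) g')" if "i \<in> I" for i
    using assms(4) that fds_iso_prod[OF S'_S] fds_iso_prod[OF T_T'] by (meson fds_iso_trans)
  ultimately show ?thesis by blast
qed

lemma length_filter_list_update:
  assumes "i < length xs"
  shows "length (filter P (xs[i := x])) + of_bool (P (xs ! i)) = length (filter P xs) + of_bool (P x)"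
  using assms by (induction xs arbitrary: i) (force split: nat.split)+

lemma even_length_filter_list_update:
  assumes "i < length xs" and "P x \<longleftrightarrow> \<not> P (xs ! i)"
  shows "even (length (filter P (xs[i := x]))) \<longleftrightarrow> odd (length (filter P xs))"
proof -
  have "\<And>m n :: nat. m + of_bool (P (xs ! i)) = n + of_bool (P x) \<Longrightarrow> even m \<longleftrightarrow> odd n"
    using assms(2) by (cases "P x") auto
  then show ?thesis using length_filter_list_update[OF assms(1)] by blast
qed

lemma map2_list_update_right:
  assumes "i < length xs"
  shows "map2 f xs (ys[i := y]) = (map2 f xs ys)[i := f (xs ! i) y]"
  using assms by (metis list_update_id map_update old.prod.case zip_update)

definition tick :: "int \<Rightarrow> bool \<times> int \<Rightarrow> bool \<times> int" where
  "tick a = (\<lambda>(on, v). (on, if on then (v + 1) mod a else v))"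

definition switch :: "int \<Rightarrow> int \<Rightarrow> bool \<times> int \<Rightarrow> bool \<times> int" where
  "switch a c = (\<lambda>(on, v). (\<not> on, if on then (v - c) mod a else (v + c) mod a))"

lemma fst_tick [simp]: "fst (tick a x) = fst x"
  by (simp add: tick_def split: prod.split)

lemma fst_switch [simp]: "fst (switch a c x) = (\<not> fst x)"
  by (simp add: switch_def split: prod.split)

lemma succ_mod_eq:
  fixes v a :: int
  assumes "0 \<le> v" and "v < a"
  shows "(v + 1) mod a = (if v + 1 = a then 0 else v + 1)"
  using assms by auto

lemma tick_in_coord: "x \<in> UNIV \<times> {0..<a} \<Longrightarrow> tick a x \<in> UNIV \<times> {0..<a}"
  by (auto simp: tick_def)

lemma inj_on_tick: "inj_on (tick a) (UNIV \<times> {0..<a})"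
proof (rule inj_onI, clarify)
  fix b v b' w
  assume "tick a (b, v) = tick a (b', w)" "v \<in> {0..<a}" "w \<in> {0..<a}"
  then show "b = b' \<and> v = w"
    by (auto simp: tick_def succ_mod_eq split: if_splits)
qed

lemma tick_eq_self_iff: "1 < a \<Longrightarrow> x \<in> UNIV \<times> {0..<a} \<Longrightarrow> tick a x = x \<longleftrightarrow> \<not> fst x"
  by (auto simp: tick_def succ_mod_eq split: if_splits)

lemma switch_in_coord: "0 < a \<Longrightarrow> switch a c x \<in> UNIV \<times> {0..<a}"
  by (simp add: switch_def split: prod.split)

lemma switch_switch: "x \<in> UNIV \<times> {0..<a} \<Longrightarrow> switch a c (switch a c x) = x"
  by (auto simp: switch_def mod_simps)

lemma switch_mod: "switch a (c mod a) = switch a c"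
  by (auto simp: switch_def mod_simps)

lemma tick_switch: "tick a (switch a c x) = switch a (c + 1) (tick a x)"
  by (auto simp: tick_def switch_def mod_simps ac_simps split: prod.split)

definition counter_states :: "int list \<Rightarrow> bool \<Rightarrow> (bool \<times> int) list set" where
  "counter_states as p = {xs. length xs = length as \<and> (\<forall>i<length as. xs ! i \<in> UNIV \<times> {0..<as ! i}) \<and>
                              even (length (filter fst xs)) = p}"

definition counter_step :: "int list \<Rightarrow> (bool \<times> int) list \<Rightarrow> (bool \<times> int) list" where
  "counter_step as = map2 tick as"

lemma finite_counter_states: "finite (counter_states as p)"
proof -
  let ?M = "Max (insert 0 (set as))"
  let ?B = "{xs :: (bool \<times> int) list. set xs \<subseteq> UNIV \<times> {0..<?M} \<and> length xs = length as}"
  have "counter_states as p \<subseteq> ?B"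
  proof
    fix xs assume xs: "xs \<in> counter_states as p"
    have "set xs \<subseteq> UNIV \<times> {0..<?M}"
    proof
      fix x assume "x \<in> set xs"
      then obtain i where i: "i < length as" "x = xs ! i"
        using xs by (auto simp: counter_states_def in_set_conv_nth)
      then have "x \<in> UNIV \<times> {0..<as ! i}" using xs by (simp add: counter_states_def)
      moreover have "as ! i \<le> ?M" using i(1) by simp
      ultimately show "x \<in> UNIV \<times> {0..<?M}" by auto
    qed
    then show "xs \<in> ?B"
      using xs by (simp add: counter_states_def)
  qed
  moreover have "finite ?B"
    by (intro finite_lists_length_eq finite_cartesian_product) auto
  ultimately show ?thesis by (rule finite_subset)
qed

lemma length_counter_step [simp]: "length (counter_step as xs) = min (length as) (length xs)"
  by (simp add: counter_step_def)

lemma nth_counter_step: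
  "i < length as \<Longrightarrow> i < length xs \<Longrightarrow> counter_step as xs ! i = tick (as ! i) (xs ! i)"
  by (simp add: counter_step_def)

lemma counter_step_in_counter_states:
  assumes xs: "xs \<in> counter_states as p"
  shows "counter_step as xs \<in> counter_states as p"
proof -
  have len: "length (counter_step as xs) = length as"
    using xs by (simp add: counter_states_def counter_step_def)
  have "map fst (counter_step as xs) = map fst xs"
    using xs len by (intro nth_equalityI) (simp_all add: counter_states_def nth_counter_step)
  moreover have "length (filter fst ys) = length (filter id (map fst ys))" for ys :: "(bool \<times> int) list"
    by (simp add: filter_map)
  ultimately have "length (filter fst (counter_step as xs)) = length (filter fst xs)"
    by metis
  moreover have "counter_step as xs ! i \<in> UNIV \<times> {0..<as ! i}" if "i < length as" for i
    using xs that by (simp add: counter_states_def nth_counter_step tick_in_coord)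
  ultimately show ?thesis
    using xs len by (simp add: counter_states_def)
qed

lemma inj_on_counter_step: "inj_on (counter_step as) (counter_states as p)"
proof (rule inj_onI)
  fix xs ys assume xs: "xs \<in> counter_states as p" and ys: "ys \<in> counter_states as p"
    and eq: "counter_step as xs = counter_step as ys"
  have len: "length xs = length as" "length ys = length as"
    using xs ys by (simp_all add: counter_states_def)
  show "xs = ys"
  proof (rule nth_equalityI)
    show "length xs = length ys" using len by simp
    fix i assume "i < length xs"
    then have i: "i < length as" using len by simp
    have "tick (as ! i) (xs ! i) = tick (as ! i) (ys ! i)"
      using eq i len nth_counter_step[of i as] by metis
    moreover have "xs ! i \<in> UNIV \<times> {0..<as ! i}" "ys ! i \<in> UNIV \<times> {0..<as ! i}"
      using xs ys i by (simp_all add: counter_states_def)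
    ultimately show "xs ! i = ys ! i" by (rule inj_onD[OF inj_on_tick])
  qed
qed

lemma is_perm_fds_counter_step: "is_perm_fds (counter_states as p) (counter_step as)"
proof -
  have "counter_step as ` counter_states as p \<subseteq> counter_states as p"
    using counter_step_in_counter_states by blast
  then have "counter_step as ` counter_states as p = counter_states as p"
    by (intro endo_inj_surj finite_counter_states inj_on_counter_step)
  then show ?thesis
    using finite_counter_states inj_on_counter_step
    by (simp add: is_perm_fds_def is_fds_def bij_betw_def)
qed

lemma counter_step_eq_self_iff:
  assumes "\<forall>a\<in>set as. 1 < a" and xs: "xs \<in> counter_states as p"
  shows "counter_step as xs = xs \<longleftrightarrow> (\<forall>x\<in>set xs. \<not> fst x)"
proof -
  have len: "length xs = length as" using xs by (simp add: counter_states_def)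
  have "tick (as ! i) (xs ! i) = xs ! i \<longleftrightarrow> \<not> fst (xs ! i)" if "i < length as" for i
    using assms that by (intro tick_eq_self_iff) (auto simp: counter_states_def)
  then have "counter_step as xs = xs \<longleftrightarrow> (\<forall>i<length as. \<not> fst (xs ! i))"
    using len by (simp add: list_eq_iff_nth_eq nth_counter_step)
  then show ?thesis
    using len by (simp add: all_set_conv_all_nth)
qed

definition switch_at :: "int list \<Rightarrow> nat \<Rightarrow> nat \<times> (bool \<times> int) list \<Rightarrow> nat \<times> (bool \<times> int) list" where
  "switch_at as j = (\<lambda>(c, xs). (c, xs[j := switch (as ! j) (int c) (xs ! j)]))"

lemma switch_at_in:
  assumes j: "j < length as" and z: "z \<in> cycle_set (nat (as ! j)) \<times> counter_states as p"
  shows "switch_at as j z \<in> cycle_set (nat (as ! j)) \<times> counter_states as (\<not> p)"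
proof -
  obtain c xs where z_eq: "z = (c, xs)" and c: "c < nat (as ! j)" and xs: "xs \<in> counter_states as p"
    using z by (auto simp: cycle_set_def)
  let ?ys = "xs[j := switch (as ! j) (int c) (xs ! j)]"
  have len: "length xs = length as" using xs by (simp add: counter_states_def)
  have "even (length (filter fst ?ys)) \<longleftrightarrow> odd (length (filter fst xs))"
    using j len by (intro even_length_filter_list_update) simp_all
  then have "even (length (filter fst ?ys)) \<longleftrightarrow> \<not> p"
    using xs by (simp add: counter_states_def)
  moreover have "?ys ! i \<in> UNIV \<times> {0..<as ! i}" if "i < length as" for i
    using xs that c switch_in_coord[of "as ! j"] by (cases "i = j") (auto simp: counter_states_def)
  ultimately show ?thesis
    using c len by (simp add: z_eq switch_at_def counter_states_def cycle_set_def)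
qed

lemma switch_at_switch_at:
  assumes j: "j < length as" and z: "z \<in> cycle_set (nat (as ! j)) \<times> counter_states as p"
  shows "switch_at as j (switch_at as j z) = z"
proof -
  obtain c xs where z_eq: "z = (c, xs)" and xs: "xs \<in> counter_states as p"
    using z by auto
  have "xs ! j \<in> UNIV \<times> {0..<as ! j}" "j < length xs"
    using xs j by (auto simp: counter_states_def)
  then show ?thesis by (simp add: z_eq switch_at_def switch_switch)
qed

lemma switch_at_commute:
  assumes j: "j < length as" and z: "z \<in> cycle_set (nat (as ! j)) \<times> counter_states as p"
  shows "switch_at as j (fds_prod_fun (cycle_fun (nat (as ! j))) (counter_step as) z)
       = fds_prod_fun (cycle_fun (nat (as ! j))) (counter_step as) (switch_at as j z)"
proof -
  obtain c xs where z_eq: "z = (c, xs)" and c: "c < nat (as ! j)" and xs: "xs \<in> counter_states as p"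
    using z by (auto simp: cycle_set_def)
  let ?a = "as ! j"
  have len: "length xs = length as" using xs by (simp add: counter_states_def)
  have "0 < ?a" using c by simp
  then have "int ((c + 1) mod nat ?a) = (int c + 1) mod ?a"
    by (simp add: zmod_int ac_simps)
  then have "switch ?a (int ((c + 1) mod nat ?a)) (tick ?a (xs ! j)) = tick ?a (switch ?a (int c) (xs ! j))"
    by (simp add: switch_mod tick_switch)
  then show ?thesis
    using j len
    by (simp add: z_eq switch_at_def fds_prod_fun_def cycle_fun_def counter_step_def
        map2_list_update_right)
qed

lemma counter_states_switch_iso:
  assumes j: "j < length as"
  shows "fds_iso (fds_prod_set (cycle_set (nat (as ! j))) (counter_states as p))
                 (fds_prod_fun (cycle_fun (nat (as ! j))) (counter_step as))
                 (fds_prod_set (cycle_set (nat (as ! j))) (counter_states as (\<not> p)))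
                 (fds_prod_fun (cycle_fun (nat (as ! j))) (counter_step as))"
  unfolding fds_iso_def fds_prod_set_def
proof (intro exI[of _ "switch_at as j"] conjI ballI)
  show "bij_betw (switch_at as j) (cycle_set (nat (as ! j)) \<times> counter_states as p)
                                  (cycle_set (nat (as ! j)) \<times> counter_states as (\<not> p))"
    using switch_at_in[OF j, of _ p] switch_at_in[OF j, of _ "\<not> p", unfolded not_not]
      switch_at_switch_at[OF j, of _ p] switch_at_switch_at[OF j, of _ "\<not> p"]
    by (intro bij_betw_byWitness[where f' = "switch_at as j"]) blast+
qed (rule switch_at_commute[OF j])

lemma counter_states_not_iso:
  assumes "\<forall>a\<in>set as. 1 < a"
  shows "\<not> fds_iso (counter_states as True) (counter_step as) (counter_states as False) (counter_step as)"
proof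
  assume iso: "fds_iso (counter_states as True) (counter_step as) (counter_states as False) (counter_step as)"
  let ?all_off = "replicate (length as) (False, 0 :: int)"
  have all_off: "?all_off \<in> counter_states as True"
    using assms nth_mem by (fastforce simp: counter_states_def)
  then have "counter_step as ?all_off = ?all_off"
    using assms by (simp add: counter_step_eq_self_iff)
  then obtain ys where ys: "ys \<in> counter_states as False" and "counter_step as ys = ys"
    using fds_iso_fixed_point[OF iso all_off] by blast
  then have "filter fst ys = []"
    using assms by (simp add: counter_step_eq_self_iff filter_empty_conv)
  then show False
    using ys by (simp add: counter_states_def)
qed

theorem mainTheorem15:
  fixes A :: "int set"
  assumes "finite A" and "\<forall>a\<in>A. a > 1"
  shows "\<exists>(S :: nat set) (f :: nat \<Rightarrow> nat) (T :: nat set) (g :: nat \<Rightarrow> nat).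
           is_perm_fds S f \<and> is_perm_fds T g \<and> \<not> fds_iso S f T g \<and>
           (\<forall>a\<in>A. fds_iso (fds_prod_set (cycle_set (nat a)) S) (fds_prod_fun (cycle_fun (nat a)) f)
                           (fds_prod_set (cycle_set (nat a)) T) (fds_prod_fun (cycle_fun (nat a)) g))"
proof -
  obtain as where as: "set as = A" using finite_list[OF assms(1)] by blast
  then have "\<forall>a\<in>set as. 1 < a" using assms(2) by simp
  note X_even_not_X_odd = counter_states_not_iso[OF this]
  have "\<forall>n\<in>nat ` A. fds_iso (fds_prod_set (cycle_set n) (counter_states as True))
                               (fds_prod_fun (cycle_fun n) (counter_step as))
                               (fds_prod_set (cycle_set n) (counter_states as False))
                               (fds_prod_fun (cycle_fun n) (counter_step as))"
    using counter_states_switch_iso[of _ as True] by (auto simp flip: as simp: in_set_conv_nth)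
  from cancellation_counterexample_to_nat[OF is_perm_fds_counter_step is_perm_fds_counter_step
      X_even_not_X_odd this]
  show ?thesis by simp
qed

end
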